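(* Let $X$ and $Y$ be independent nonnegative random variables with distributions $F$ and $G$, where $F$ has unbounded support, and let $H$ be the distribution of $XY$. If $G^{*k}\in\mathcal L$ for some integer $k\ge1$, then for every constant $d>0$, $$\overline G(x/d)-\overline G\big((x+1)/d\big)=o\big(\overline H(x)\big)\quad\text{as }x\to\infty.$$
   Context: For a distribution $V$, $\overline V=1-V$ denotes its tail, and $V^{*k}$ denotes the $k$-fold convolution of $V$ with itself (the distribution of the sum of $k$ independent copies). All limits are as $x\to\infty$; $f(x)\sim g(x)$ means $f(x)/g(x)\to1$ and $f(x)=o(g(x))$ means $f(x)/g(x)\to0$. A distribution $V$ is long-tailed, written $V\in\mathcal L$, if $\overline V(x)>0$ for all $x$ and $\overline V(x-t)\sim\overline V(x)$ for every real $t$. *)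

theory Defs
  imports "HOL-Probability.Probability" "HOL-Probability.Convolution" "HOL-Library.Landau_Symbols"
begin

definition real_distribution :: "real measure \<Rightarrow> bool" where
  "real_distribution V \<longleftrightarrow> prob_space V \<and> sets V = sets borel"

definition tail :: "real measure \<Rightarrow> real \<Rightarrow> real" where
  "tail V x = 1 - measure V {..x}"

fun conv_pow :: "real measure \<Rightarrow> nat \<Rightarrow> real measure" where
  "conv_pow V 0 = return borel 0"
| "conv_pow V (Suc k) = convolution V (conv_pow V k)"

definition long_tailed :: "real measure \<Rightarrow> bool" where
  "long_tailed V \<longleftrightarrow> (\<forall>x. tail V x > 0) \<and>
     (\<forall>t::real. (\<lambda>x. tail V (x - t)) \<sim>[at_top] (\<lambda>x. tail V x))"

definition nonneg_distribution :: "real measure \<Rightarrow> bool" where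
  "nonneg_distribution V \<longleftrightarrow> real_distribution V \<and> measure V {..<0} = 0"

definition prod_distribution :: "real measure \<Rightarrow> real measure \<Rightarrow> real measure" where
  "prod_distribution F G = distr (F \<Otimes>\<^sub>M G) borel (\<lambda>(x, y). x * y)"

end

theory Submission imports Defs begin

text \<open>
  Write S = G^{*k} as the convolution of G with T = G^{*(k-1)} and fix a with T[-a,a] > 0.
  Then G(y, y+h] T[-a,a] \<le> S(y-a, y+h+a], and the right-hand side is o(S(y,\<infinity>)) because
  S is long-tailed. A union bound gives S(y,\<infinity>) \<le> k G(y/k,\<infinity>), while the event
  {X > c, Y > x/c} gives H(x,\<infinity>) \<ge> F(c,\<infinity>) G(x/c,\<infinity>), where F(c,\<infinity>) > 0 because F has
  unbounded support. Taking y = x/d, h = 1/d and c = kd chains these estimates.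
\<close>

lemma space_real_distribution: "real_distribution V \<Longrightarrow> space V = UNIV"
  unfolding real_distribution_def by (metis sets_eq_imp_space_eq space_borel)

lemma sets_real_distribution: "real_distribution V \<Longrightarrow> A \<in> sets borel \<Longrightarrow> A \<in> sets V"
  unfolding real_distribution_def by simp

lemma pair_prob_space_real_distribution:
  "real_distribution M \<Longrightarrow> real_distribution N \<Longrightarrow> pair_prob_space M N"
  unfolding real_distribution_def
  by (simp add: pair_prob_space_def pair_sigma_finite_def prob_space_imp_sigma_finite)

lemma space_pair_real_distribution:
  "real_distribution M \<Longrightarrow> real_distribution N \<Longrightarrow> space (M \<Otimes>\<^sub>M N) = UNIV"
  by (simp add: space_pair_measure space_real_distribution)

lemma measurable_pair_real_distribution:
  assumes "real_distribution M" "real_distribution N"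
    and "f \<in> borel_measurable (borel \<Otimes>\<^sub>M (borel :: real measure))"
  shows "f \<in> borel_measurable (M \<Otimes>\<^sub>M N)"
proof -
  have "sets (M \<Otimes>\<^sub>M N) = sets (borel \<Otimes>\<^sub>M borel)"
    using assms by (intro sets_pair_measure_cong) (auto simp: real_distribution_def)
  then show ?thesis using assms(3) by (subst measurable_cong_sets) auto
qed

lemma real_distribution_distr_pair:
  assumes "real_distribution M" "real_distribution N"
    and "f \<in> borel_measurable (borel \<Otimes>\<^sub>M borel)"
  shows "real_distribution (distr (M \<Otimes>\<^sub>M N) borel f)"
proof -
  interpret pair_prob_space M N using pair_prob_space_real_distribution[OF assms(1,2)] .
  show ?thesis
    using measurable_pair_real_distribution[OF assms]
    unfolding real_distribution_def by (auto intro!: prob_space_distr)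
qed

lemma measure_distr_pair:
  assumes "real_distribution M" "real_distribution N"
    and "f \<in> borel_measurable (borel \<Otimes>\<^sub>M borel)" and "A \<in> sets borel"
  shows "measure (distr (M \<Otimes>\<^sub>M N) borel f) A = measure (M \<Otimes>\<^sub>M N) {p. f p \<in> A}"
    and "{p. f p \<in> A} \<in> sets (M \<Otimes>\<^sub>M N)"
proof -
  have f: "f \<in> borel_measurable (M \<Otimes>\<^sub>M N)"
    using measurable_pair_real_distribution[OF assms(1-3)] .
  have preimage: "f -` A \<inter> space (M \<Otimes>\<^sub>M N) = {p. f p \<in> A}"
    using space_pair_real_distribution[OF assms(1,2)] by auto
  show "measure (distr (M \<Otimes>\<^sub>M N) borel f) A = measure (M \<Otimes>\<^sub>M N) {p. f p \<in> A}"
    using measure_distr[OF f assms(4)] preimage by simp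
  show "{p. f p \<in> A} \<in> sets (M \<Otimes>\<^sub>M N)"
    using measurable_sets[OF f assms(4)] preimage by simp
qed

lemma measure_pair_Times_real_distribution:
  assumes "real_distribution M" "real_distribution N" "A \<in> sets borel" "B \<in> sets borel"
  shows "measure (M \<Otimes>\<^sub>M N) (A \<times> B) = measure M A * measure N B"
proof -
  interpret pair_prob_space M N using pair_prob_space_real_distribution[OF assms(1,2)] .
  have "A \<in> sets M" "B \<in> sets N" using assms sets_real_distribution by auto
  then show ?thesis
    by (simp add: measure_def M2.emeasure_pair_measure_Times enn2real_mult)
qed

lemma real_distribution_convolution:
  "real_distribution M \<Longrightarrow> real_distribution N \<Longrightarrow> real_distribution (convolution M N)"
  unfolding convolution_def by (rule real_distribution_distr_pair) measurable

lemma real_distribution_conv_pow: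
  "real_distribution G \<Longrightarrow> real_distribution (conv_pow G m)"
  by (induction m) (simp_all add: real_distribution_convolution,
      simp add: real_distribution_def prob_space_return)

lemma real_distribution_prod_distribution:
  "real_distribution F \<Longrightarrow> real_distribution G \<Longrightarrow> real_distribution (prod_distribution F G)"
  unfolding prod_distribution_def by (rule real_distribution_distr_pair) measurable

lemma measure_convolution:
  assumes "real_distribution M" "real_distribution N" "A \<in> sets borel"
  shows "measure (convolution M N) A = measure (M \<Otimes>\<^sub>M N) {p. fst p + snd p \<in> A}"
    and "{p. fst p + snd p \<in> A} \<in> sets (M \<Otimes>\<^sub>M N)"
  using measure_distr_pair[OF assms(1,2) _ assms(3), of "\<lambda>(x, y). x + y"]
  by (simp_all add: convolution_def case_prod_beta')

lemma measure_prod_distribution: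
  assumes "real_distribution F" "real_distribution G" "A \<in> sets borel"
  shows "measure (prod_distribution F G) A = measure (F \<Otimes>\<^sub>M G) {p. fst p * snd p \<in> A}"
    and "{p. fst p * snd p \<in> A} \<in> sets (F \<Otimes>\<^sub>M G)"
  using measure_distr_pair[OF assms(1,2) _ assms(3), of "\<lambda>(x, y). x * y"]
  by (simp_all add: prod_distribution_def case_prod_beta')

lemma tail_eq_measure_greaterThan:
  assumes "real_distribution V"
  shows "tail V x = measure V {x<..}"
proof -
  interpret prob_space V using assms by (simp add: real_distribution_def)
  have "measure V (space V - {..x}) = 1 - measure V {..x}"
    using assms by (intro prob_compl) (simp add: sets_real_distribution)
  moreover have "space V - {..x} = {x<..}" using space_real_distribution[OF assms] by auto
  ultimately show ?thesis by (simp add: tail_def)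
qed

lemma tail_nonneg: "real_distribution V \<Longrightarrow> tail V x \<ge> 0"
  by (simp add: tail_eq_measure_greaterThan)

lemma tail_diff_eq_measure:
  assumes "real_distribution V" "a \<le> b"
  shows "tail V a - tail V b = measure V {a<..b}"
proof -
  interpret prob_space V using assms by (simp add: real_distribution_def)
  have "measure V ({..a} \<union> {a<..b}) = measure V {..a} + measure V {a<..b}"
    using assms by (intro finite_measure_Union) (auto simp: sets_real_distribution)
  moreover have "{..a} \<union> {a<..b} = {..b}" using assms by auto
  ultimately show ?thesis by (simp add: tail_def)
qed

lemma tail_convolution_le:
  assumes "real_distribution M" "real_distribution N"
  shows "tail (convolution M N) (a + b) \<le> tail M a + tail N b"
proof -
  interpret pair_prob_space M N using pair_prob_space_real_distribution[OF assms] .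
  have "tail (convolution M N) (a + b) = measure (M \<Otimes>\<^sub>M N) {p. fst p + snd p \<in> {a + b<..}}"
    using assms
    by (simp add: tail_eq_measure_greaterThan real_distribution_convolution measure_convolution)
  also have "\<dots> \<le> measure (M \<Otimes>\<^sub>M N) ({a<..} \<times> UNIV \<union> UNIV \<times> {b<..})"
    using assms by (intro finite_measure_mono) (auto simp: sets_real_distribution)
  also have "\<dots> \<le> measure (M \<Otimes>\<^sub>M N) ({a<..} \<times> UNIV) + measure (M \<Otimes>\<^sub>M N) (UNIV \<times> {b<..})"
    using assms by (intro measure_subadditive) (auto simp: sets_real_distribution)
  also have "\<dots> = tail M a + tail N b"
    using assms M1.prob_space M2.prob_space
    by (simp add: measure_pair_Times_real_distribution tail_eq_measure_greaterThan
        space_real_distribution)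
  finally show ?thesis .
qed

lemma tail_conv_pow_le:
  assumes "real_distribution G"
  shows "tail (conv_pow G m) (real m * z) \<le> real m * tail G z"
proof (induction m)
  case 0
  then show ?case by (simp add: tail_def measure_return)
next
  case (Suc m)
  have "tail (conv_pow G (Suc m)) (real (Suc m) * z)
      = tail (convolution G (conv_pow G m)) (z + real m * z)"
    by (simp add: algebra_simps)
  also have "\<dots> \<le> tail G z + tail (conv_pow G m) (real m * z)"
    by (intro tail_convolution_le assms real_distribution_conv_pow)
  also have "\<dots> \<le> real (Suc m) * tail G z" using Suc by (simp add: algebra_simps)
  finally show ?case .
qed

lemma measure_Ioc_mult_le_convolution:
  assumes "real_distribution M" "real_distribution N" "0 \<le> h" "0 \<le> a"
  shows "measure M {y<..y + h} * measure N {-a..a} \<le> measure (convolution M N) {y - a<..y + h + a}"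
proof -
  interpret pair_prob_space M N using pair_prob_space_real_distribution[OF assms(1,2)] .
  have "measure M {y<..y + h} * measure N {-a..a} = measure (M \<Otimes>\<^sub>M N) ({y<..y + h} \<times> {-a..a})"
    using assms by (simp add: measure_pair_Times_real_distribution)
  also have "\<dots> \<le> measure (M \<Otimes>\<^sub>M N) {p. fst p + snd p \<in> {y - a<..y + h + a}}"
    using assms by (intro finite_measure_mono measure_convolution(2)) auto
  also have "\<dots> = measure (convolution M N) {y - a<..y + h + a}"
    using assms by (simp add: measure_convolution)
  finally show ?thesis .
qed

lemma tail_prod_distribution_ge:
  assumes "real_distribution F" "real_distribution G" "c > 0" "x > 0"
  shows "measure F {c<..} * tail G (x / c) \<le> tail (prod_distribution F G) x"
proof -
  interpret pair_prob_space F G using pair_prob_space_real_distribution[OF assms(1,2)] .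
  have "{c<..} \<times> {x / c<..} \<subseteq> {p. fst p * snd p \<in> {x<..}}"
  proof clarsimp
    fix u v assume "c < u" "x / c < v"
    moreover have "x = c * (x / c)" using assms by simp
    ultimately show "x < u * v"
      using assms by (smt (verit) divide_pos_pos mult_strict_mono)
  qed
  then have "measure (F \<Otimes>\<^sub>M G) ({c<..} \<times> {x / c<..})
      \<le> measure (F \<Otimes>\<^sub>M G) {p. fst p * snd p \<in> {x<..}}"
    using assms by (intro finite_measure_mono measure_prod_distribution(2)) auto
  then show ?thesis
    using assms
    by (simp add: measure_pair_Times_real_distribution measure_prod_distribution
        tail_eq_measure_greaterThan real_distribution_prod_distribution)
qed

lemma exists_Icc_measure_pos:
  assumes "real_distribution T"
  shows "\<exists>a\<ge>0. measure T {-a..a} > 0"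
proof (rule ccontr)
  interpret prob_space T using assms by (simp add: real_distribution_def)
  assume "\<not> ?thesis"
  then have "\<And>n::nat. measure T {-real n..real n} = 0"
    by (metis of_nat_0_le_iff measure_nonneg order_less_le)
  then have "(\<Union>n::nat. {-real n..real n}) \<in> null_sets T"
    using assms
    by (intro null_sets_UN) (auto simp: sets_real_distribution null_sets_def emeasure_eq_measure)
  moreover have "(\<Union>n::nat. {-real n..real n}) = space T"
  proof -
    have "\<exists>n::nat. \<bar>x\<bar> \<le> real n" for x :: real by (meson real_arch_simple)
    then show ?thesis
      using space_real_distribution[OF assms] by (auto simp: abs_le_iff) (metis minus_le_iff)
  qed
  ultimately show False by (metis emeasure_space_1 null_setsD1 zero_neq_one)
qed

lemma long_tailed_tail_diff_smallo:
  assumes "long_tailed S"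
  shows "(\<lambda>y. tail S (y - a) - tail S (y + b)) \<in> o(tail S)"
proof -
  have "(\<lambda>y. tail S (y - t)) \<sim>[at_top] tail S" for t
    using assms unfolding long_tailed_def by blast
  then have "(\<lambda>y. tail S (y - t) - tail S y) \<in> o(tail S)" for t
    by (simp add: asymp_equiv_altdef)
  from sum_in_smallo(2)[OF this[of a] this[of "-b"]] show ?thesis by simp
qed

lemma tail_increment_bigo_convolution:
  assumes "real_distribution G" "real_distribution T"
    and "0 \<le> a" "measure T {-a..a} > 0" "0 \<le> h"
  shows "(\<lambda>y. tail G y - tail G (y + h))
    \<in> O[F](\<lambda>y. tail (convolution G T) (y - a) - tail (convolution G T) (y + h + a))"
proof (rule landau_o.bigI[of "1 / measure T {-a..a}"])
  let ?S = "convolution G T"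
  have "norm (tail G y - tail G (y + h))
      \<le> 1 / measure T {-a..a} * norm (tail ?S (y - a) - tail ?S (y + h + a))" for y
  proof -
    have diff_eq: "tail G y - tail G (y + h) = measure G {y<..y + h}"
      using tail_diff_eq_measure[OF assms(1), of y "y + h"] assms(5) by simp
    have "measure G {y<..y + h} * measure T {-a..a} \<le> tail ?S (y - a) - tail ?S (y + h + a)"
      using measure_Ioc_mult_le_convolution[OF assms(1,2,5,3), of y] assms(3,5)
        tail_diff_eq_measure[OF real_distribution_convolution[OF assms(1,2)], of "y - a" "y + h + a"]
      by simp
    then have "measure G {y<..y + h}
        \<le> (tail ?S (y - a) - tail ?S (y + h + a)) / measure T {-a..a}"
      using assms(4) by (simp add: pos_le_divide_eq)
    also have "\<dots> \<le> \<bar>tail ?S (y - a) - tail ?S (y + h + a)\<bar> / measure T {-a..a}"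
      using assms(4) by (intro divide_right_mono) auto
    finally show ?thesis by (simp add: diff_eq)
  qed
  then show "\<forall>\<^sub>F y in F. norm (tail G y - tail G (y + h))
      \<le> 1 / measure T {-a..a} * norm (tail ?S (y - a) - tail ?S (y + h + a))"
    by (intro always_eventually allI)
qed (use assms(4) in simp)

lemma tail_increment_smallo_conv_pow:
  assumes "real_distribution G" "k \<ge> 1" "long_tailed (conv_pow G k)" "0 \<le> h"
  shows "(\<lambda>y. tail G y - tail G (y + h)) \<in> o(tail (conv_pow G k))"
proof -
  define T where "T = conv_pow G (k - 1)"
  have conv_pow_eq: "conv_pow G k = convolution G T"
    using assms(2) unfolding T_def by (cases k) auto
  obtain a where "a \<ge> 0" and "measure T {-a..a} > 0"
    using exists_Icc_measure_pos[OF real_distribution_conv_pow[OF assms(1)]] T_def by blast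
  from tail_increment_bigo_convolution[OF assms(1) _ this assms(4)]
  have "(\<lambda>y. tail G y - tail G (y + h))
      \<in> O(\<lambda>y. tail (conv_pow G k) (y - a) - tail (conv_pow G k) (y + (h + a)))"
    unfolding conv_pow_eq T_def by (simp add: real_distribution_conv_pow assms(1) add.assoc)
  also have "(\<lambda>y. tail (conv_pow G k) (y - a) - tail (conv_pow G k) (y + (h + a)))
      \<in> o(tail (conv_pow G k))"
    by (rule long_tailed_tail_diff_smallo[OF assms(3)])
  finally show ?thesis .
qed

lemma tail_conv_pow_bigo:
  assumes "real_distribution G" "k \<ge> 1"
  shows "tail (conv_pow G k) \<in> O[F](\<lambda>y. tail G (y / real k))"
proof (rule landau_o.bigI[of "real k"])
  have "tail (conv_pow G k) y \<le> real k * tail G (y / real k)" for y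
    using tail_conv_pow_le[OF assms(1), of k "y / real k"] assms(2) by simp
  then show "\<forall>\<^sub>F y in F. norm (tail (conv_pow G k) y) \<le> real k * norm (tail G (y / real k))"
    by (intro always_eventually allI)
      (simp add: tail_nonneg assms(1) real_distribution_conv_pow)
qed (use assms(2) in simp)

lemma tail_bigo_prod_distribution:
  assumes "real_distribution F" "real_distribution G" "c > 0" "measure F {c<..} > 0"
  shows "(\<lambda>x. tail G (x / c)) \<in> O(tail (prod_distribution F G))"
proof (rule landau_o.bigI[of "1 / measure F {c<..}"])
  show "\<forall>\<^sub>F x in at_top. norm (tail G (x / c))
      \<le> 1 / measure F {c<..} * norm (tail (prod_distribution F G) x)"
    using eventually_gt_at_top[of 0]
  proof eventually_elim
    case (elim x)
    then show ?case
      using tail_prod_distribution_ge[OF assms(1-3) elim] assms(4)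
      by (simp add: tail_nonneg assms real_distribution_prod_distribution field_simps)
  qed
qed (use assms(4) in simp)

theorem mainTheorem5:
  fixes F G :: "real measure" and k :: nat and d :: real
  assumes "nonneg_distribution F" and "nonneg_distribution G"
    and "\<forall>x. measure F {x<..} > 0"
    and "k \<ge> 1" and "long_tailed (conv_pow G k)"
    and "d > 0"
  shows "(\<lambda>x. tail G (x / d) - tail G ((x + 1) / d))
           \<in> o[at_top](\<lambda>x. tail (prod_distribution F G) x)"
proof -
  have F: "real_distribution F" and G: "real_distribution G"
    using assms(1,2) by (auto simp: nonneg_distribution_def)
  have lim: "filterlim (\<lambda>x. x / d) at_top at_top"
    using filterlim_tendsto_pos_mult_at_top[OF tendsto_const[of "1 / d"] _ filterlim_ident]
      assms(6) by simp
  have "(\<lambda>x. tail G (x / d) - tail G (x / d + 1 / d)) \<in> o(\<lambda>x. tail (conv_pow G k) (x / d))"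
    using landau_o.small.compose[OF tail_increment_smallo_conv_pow[OF G assms(4,5)] lim] assms(6)
    by simp
  also have "(\<lambda>x. tail (conv_pow G k) (x / d)) \<in> O(\<lambda>x. tail G (x / (real k * d)))"
    using landau_o.big.compose[OF tail_conv_pow_bigo[OF G assms(4)] lim] by (simp add: mult.commute)
  also have "(\<lambda>x. tail G (x / (real k * d))) \<in> O(tail (prod_distribution F G))"
    using tail_bigo_prod_distribution[OF F G] assms(3,4,6) by simp
  finally show ?thesis by (simp add: add_divide_distrib)
qed

end
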